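(* Let $N\ge 2$ and let $P=(P_{ij})_{i,j=1}^N$ be the transition matrix of an irreducible Markov chain on $\{1,\dots,N\}$. For each $k$ let $Q^{(k)}=(P_{ij})_{i,j\ne k}$ be obtained from $P$ by deleting its $k$-th row and column, and assume that for every $k$ there is $n_0(k)$ such that all entries of $(Q^{(k)})^n$ are positive for all $n>n_0(k)$. Let $\mu_k$ be the Perron–Frobenius eigenvalue of $Q^{(k)}$, $\lambda_k=-\ln\mu_k$ ($\lambda_k=\infty$ if $\mu_k=0$), and for a probability vector $p\in\Delta_N$ let $M^{(k)}_n(p)=\sum_{i\ne k}\bigl(p^{(k)}(Q^{(k)})^n\bigr)_i$ with $p^{(k)}=(p_i)_{i\ne k}$. Then: (1) If $\lambda_i>\lambda_j$, then for any $p,q\in\Delta_N$ with $q_j<1$ there is $n_0=n_0(p,q)\in\mathbb{N}$ such that $M^{(i)}_n(p)<M^{(j)}_n(q)$ for all $n\ge n_0$. (2) If $\sigma$ is a permutation of $\{1,\dots,N\}$ with $\lambda_{\sigma_N}<\dots<\lambda_{\sigma_1}<\infty$, then for any family $p(1),\dots,p(N)\in\Delta_N$ with $p_i(i)<1$ for all $i$ there is $n_0\in\mathbb{N}$ such that for all $n\ge n_0$, \[ M^{(\sigma_1)}_n(p(\sigma_1))<M^{(\sigma_2)}_n(p(\sigma_2))<\dots<M^{(\sigma_N)}_n(p(\sigma_N)). \] (3) If $i$ is a state with $\lambda_i>\lambda_k$ for all $k\ne i$, then for any $p\in\Delta_N$ and any $k\ne i$ with $p_k<1$ there is $n_0=n_0(p)$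 such that $M^{(i)}_n(p)<M^{(k)}_n(p)$ for all $n\ge n_0$.
   Context: $\Delta_N$ is the simplex of probability distributions on $\{1,\dots,N\}$ (row vectors). $M^{(k)}_n(p)$ is the survival probability up to time $n$ of the chain started from $p$ and killed upon entering state $k$. *)

theory Defs
  imports Complex_Main "HOL-Library.Extended_Real"
begin

text \<open>Matrices are functions nat => nat => real, restricted to a finite index set S.
  mpow S A n is the n-th power of the matrix (A i j) with i,j ranging over S.\<close>
fun mpow :: "nat set \<Rightarrow> (nat \<Rightarrow> nat \<Rightarrow> real) \<Rightarrow> nat \<Rightarrow> nat \<Rightarrow> nat \<Rightarrow> real" where
  "mpow S A 0 i j = (if i = j then 1 else 0)"
| "mpow S A (Suc n) i j = (\<Sum>l\<in>S. mpow S A n i l * A l j)"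

definition stochastic :: "nat set \<Rightarrow> (nat \<Rightarrow> nat \<Rightarrow> real) \<Rightarrow> bool" where
  "stochastic S P \<longleftrightarrow> (\<forall>i\<in>S. \<forall>j\<in>S. P i j \<ge> 0) \<and> (\<forall>i\<in>S. (\<Sum>j\<in>S. P i j) = 1)"

definition irreducible_chain :: "nat set \<Rightarrow> (nat \<Rightarrow> nat \<Rightarrow> real) \<Rightarrow> bool" where
  "irreducible_chain S P \<longleftrightarrow> (\<forall>i\<in>S. \<forall>j\<in>S. \<exists>n. mpow S P n i j > 0)"

definition prob_vec :: "nat set \<Rightarrow> (nat \<Rightarrow> real) \<Rightarrow> bool" where
  "prob_vec S p \<longleftrightarrow> (\<forall>i\<in>S. p i \<ge> 0) \<and> (\<Sum>i\<in>S. p i) = 1"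

definition is_eigenvalue :: "nat set \<Rightarrow> (nat \<Rightarrow> nat \<Rightarrow> real) \<Rightarrow> complex \<Rightarrow> bool" where
  "is_eigenvalue T A z \<longleftrightarrow> (\<exists>v :: nat \<Rightarrow> complex. (\<exists>i\<in>T. v i \<noteq> 0) \<and>
      (\<forall>i\<in>T. (\<Sum>j\<in>T. of_real (A i j) * v j) = z * v i))"

text \<open>Perron--Frobenius eigenvalue of a nonnegative matrix: its spectral radius
  (the largest modulus of its eigenvalues, which is itself an eigenvalue).\<close>
definition pf_eigenvalue :: "nat set \<Rightarrow> (nat \<Rightarrow> nat \<Rightarrow> real) \<Rightarrow> real" where
  "pf_eigenvalue T A = Sup {cmod z | z. is_eigenvalue T A z}"

definition decay_rate :: "nat set \<Rightarrow> (nat \<Rightarrow> nat \<Rightarrow> real) \<Rightarrow> nat \<Rightarrow> ereal" where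
  "decay_rate S P k = (let \<mu> = pf_eigenvalue (S - {k}) P in
      if \<mu> = 0 then \<infinity> else ereal (- ln \<mu>))"

definition survival :: "nat set \<Rightarrow> (nat \<Rightarrow> nat \<Rightarrow> real) \<Rightarrow> nat \<Rightarrow> nat \<Rightarrow> (nat \<Rightarrow> real) \<Rightarrow> real" where
  "survival S P k n p = (\<Sum>i\<in>S - {k}. \<Sum>l\<in>S - {k}. p l * mpow (S - {k}) P n l i)"

end

theory Submission
  imports Defs "Jordan_Normal_Form.Spectral_Radius"
begin

text \<open>The survival probability \<open>M\<^sup>k\<^sub>n(p)\<close> is a weighted row sum of \<open>Q\<^sub>k\<^sup>n\<close>,
  where \<open>Q\<^sub>k\<close> is the nonnegative matrix \<open>P\<close> with row and column \<open>k\<close> removed. For any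
  \<open>r\<^sub>1 > \<mu>\<^sub>i\<close>, the Jordan normal form bounds the entries of \<open>Q\<^sub>i\<^sup>n\<close> by \<open>C r\<^sub>1\<^sup>n\<close>. For
  any \<open>r < \<mu>\<^sub>j\<close> there is an eigenvalue of \<open>Q\<^sub>j\<close> of modulus \<open>> r\<close>; evaluating its
  eigenvector at an entry of maximal modulus shows that some row sum of \<open>Q\<^sub>j\<^sup>n\<close> is at
  least \<open>r\<^sup>n\<close>, primitivity of \<open>Q\<^sub>j\<close> spreads this to all rows, and \<open>q\<^sub>j < 1\<close> means
  that \<open>q\<close> charges these rows, so \<open>M\<^sup>j\<^sub>n(q) \<ge> c r\<^sup>n\<close>. With
  \<open>\<mu>\<^sub>i < r\<^sub>1 < r < \<mu>\<^sub>j\<close> the comparison \<open>M\<^sup>i\<^sub>n(p) < M\<^sup>j\<^sub>n(q)\<close> holds eventually, and all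
  three statements are instances of it.\<close>

lemma mpow_nonneg:
  assumes "\<forall>i\<in>T. \<forall>j\<in>T. A i j \<ge> 0" "i \<in> T" "j \<in> T"
  shows "mpow T A n i j \<ge> 0"
  using assms(3)
proof (induction n arbitrary: j)
  case 0 then show ?case by simp
next
  case (Suc n) then show ?case using assms(1,2) by (auto intro!: sum_nonneg)
qed

lemma mpow_add:
  assumes "finite T" "j \<in> T"
  shows "mpow T A (m + n) i j = (\<Sum>l\<in>T. mpow T A m i l * mpow T A n l j)"
  using assms(2)
proof (induction n arbitrary: j)
  case 0 then show ?case using assms(1) by (simp add: if_distrib cong: if_cong)
next
  case (Suc n)
  have "mpow T A (m + Suc n) i j = (\<Sum>l'\<in>T. mpow T A (m+n) i l' * A l' j)" by simp
  also have "\<dots> = (\<Sum>l'\<in>T. (\<Sum>l\<in>T. mpow T A m i l * mpow T A n l l') * A l' j)"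
    using Suc.IH by (intro sum.cong) auto
  also have "\<dots> = (\<Sum>l\<in>T. mpow T A m i l * (\<Sum>l'\<in>T. mpow T A n l l' * A l' j))"
    by (simp only: sum_distrib_right sum_distrib_left mult.assoc) (rule sum.swap)
  finally show ?case by simp
qed

lemma mpow_scale: "mpow T (\<lambda>i j. c * A i j) k i j = c ^ k * mpow T A k i j"
  by (induction k arbitrary: j) (auto simp: sum_distrib_left mult_ac)

subsection \<open>Transfer to complex matrices\<close>

definition cmat_of :: "nat \<Rightarrow> (nat \<Rightarrow> nat) \<Rightarrow> (nat \<Rightarrow> nat \<Rightarrow> real) \<Rightarrow> complex mat" where
  "cmat_of n g B = mat n n (\<lambda>(a, b). complex_of_real (B (g a) (g b)))"

lemma cmat_of_carrier: "cmat_of n g B \<in> carrier_mat n n"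
  by (simp add: cmat_of_def)

lemma cmat_of_power:
  assumes g: "bij_betw g {..<n} T" and "a < n" "b < n"
  shows "(cmat_of n g B ^\<^sub>m k) $$ (a, b) = of_real (mpow T B k (g a) (g b))"
  using assms(2,3)
proof (induction k arbitrary: a b)
  case 0
  then show ?case using bij_betw_inv_into_left[OF g]
    by (auto simp: cmat_of_def lessThan_iff) (metis lessThan_iff)
next
  case (Suc k)
  let ?M = "cmat_of n g B"
  have "(?M ^\<^sub>m Suc k) $$ (a, b) = (\<Sum>c\<in>{0..<n}. (?M ^\<^sub>m k) $$ (a, c) * ?M $$ (c, b))"
    using Suc.prems by (simp add: scalar_prod_def cmat_of_def)
  also have "\<dots> = (\<Sum>c\<in>{..<n}. of_real (mpow T B k (g a) (g c) * B (g c) (g b)))"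
    using Suc by (intro sum.cong) (auto simp: cmat_of_def)
  also have "\<dots> = of_real (\<Sum>l\<in>T. mpow T B k (g a) l * B l (g b))"
    by (subst sum.reindex_bij_betw[OF g, of "\<lambda>l. complex_of_real (mpow T B k (g a) l * B l (g b))"]) simp
  finally show ?case by simp
qed

lemma eigenvalue_cmat_of_imp_is_eigenvalue:
  assumes g: "bij_betw g {..<n} T" and ev: "eigenvalue (cmat_of n g B) z"
  shows "is_eigenvalue T B z"
proof -
  let ?M = "cmat_of n g B"
  from ev obtain v where v: "v \<in> carrier_vec n" "v \<noteq> 0\<^sub>v n" "?M *\<^sub>v v = z \<cdot>\<^sub>v v"
    unfolding eigenvalue_def eigenvector_def by (auto simp: cmat_of_def)
  define w where "w x = v $ (inv_into {..<n} g x)" for x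
  have inj: "inj_on g {..<n}" using g bij_betw_def by blast
  have wg: "w (g a) = v $ a" if "a < n" for a
    unfolding w_def using inv_into_f_f[OF inj] that by simp
  have "\<exists>a<n. v $ a \<noteq> 0"
  proof (rule ccontr)
    assume "\<not> ?thesis"
    hence "v = 0\<^sub>v n" using v(1) by (intro eq_vecI) auto
    with v(2) show False by simp
  qed
  then obtain a where a: "a < n" "v $ a \<noteq> 0" by auto
  have nonzero: "\<exists>i\<in>T. w i \<noteq> 0"
    using a wg[OF a(1)] bij_betw_apply[OF g] by (intro bexI[of _ "g a"]) auto
  have eq: "(\<Sum>j\<in>T. of_real (B i j) * w j) = z * w i" if i: "i \<in> T" for i
  proof -
    define a where "a = inv_into {..<n} g i"
    have a: "a < n" "g a = i" unfolding a_def
      using i g by (auto simp: bij_betw_def inv_into_into f_inv_into_f)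
    have "(\<Sum>j\<in>T. of_real (B i j) * w j) = (\<Sum>c\<in>{..<n}. of_real (B i (g c)) * w (g c))"
      by (rule sum.reindex_bij_betw[OF g, symmetric])
    also have "\<dots> = (\<Sum>c\<in>{0..<n}. ?M $$ (a, c) * v $ c)"
      using a wg by (intro sum.cong) (auto simp: cmat_of_def)
    also have "\<dots> = (?M *\<^sub>v v) $ a"
      using a v(1) by (simp add: scalar_prod_def cmat_of_def)
    also have "\<dots> = z * w i" using v(3) a v(1) wg[OF a(1)] by simp
    finally show ?thesis .
  qed
  show ?thesis unfolding is_eigenvalue_def using nonzero eq by blast
qed

lemma finite_set_enumeration:
  assumes "finite T"
  obtains g where "bij_betw g {..<card T} T"
  using ex_bij_betw_nat_finite[OF assms] by (auto simp: atLeast0LessThan)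

lemma is_eigenvalue_exists:
  assumes "finite T" "T \<noteq> {}"
  shows "\<exists>z. is_eigenvalue T B z"
proof -
  obtain g where g: "bij_betw g {..<card T} T" using finite_set_enumeration[OF assms(1)] .
  have "card T > 0" using assms by (simp add: card_gt_0_iff)
  from spectrum_non_empty[OF cmat_of_carrier this]
  obtain z where "eigenvalue (cmat_of (card T) g B) z"
    unfolding spectrum_def by auto
  from eigenvalue_cmat_of_imp_is_eigenvalue[OF g this] show ?thesis by blast
qed

lemma mpow_bounded_if_eigenvalues_in_unit_disc:
  assumes T: "finite T" "T \<noteq> {}"
    and lt1: "\<And>z. is_eigenvalue T B z \<Longrightarrow> cmod z < 1"
  shows "\<exists>c. \<forall>k. \<forall>i\<in>T. \<forall>j\<in>T. \<bar>mpow T B k i j\<bar> \<le> c"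
proof -
  obtain g where g: "bij_betw g {..<card T} T" using finite_set_enumeration[OF T(1)] .
  define n where "n = card T"
  have n: "n > 0" using T by (simp add: card_gt_0_iff n_def)
  define M where "M = cmat_of n g B"
  have M: "M \<in> carrier_mat n n" unfolding M_def by (rule cmat_of_carrier)
  from spectral_radius_mem_max(1)[OF M n] obtain w where
    w: "w \<in> spectrum M" "spectral_radius M = cmod w" by auto
  have "is_eigenvalue T B w"
    using eigenvalue_cmat_of_imp_is_eigenvalue[OF g] w(1) unfolding spectrum_def M_def n_def by auto
  hence "spectral_radius M < 1" using lt1 w(2) by simp
  from spectral_radius_jnf_norm_bound_less_1_upper_triangular[OF M this]
  obtain c where c: "\<forall>k. norm_bound (M ^\<^sub>m k) c" by blast
  have "\<bar>mpow T B k i j\<bar> \<le> c" if i: "i \<in> T" and j: "j \<in> T" for k i j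
  proof -
    obtain a where a: "a < n" "g a = i" using i g unfolding n_def bij_betw_def by (metis imageE lessThan_iff)
    obtain b where b: "b < n" "g b = j" using j g unfolding n_def bij_betw_def by (metis imageE lessThan_iff)
    have "norm ((M ^\<^sub>m k) $$ (a, b)) \<le> c" using c a b M unfolding norm_bound_def by auto
    also have "(M ^\<^sub>m k) $$ (a, b) = of_real (mpow T B k i j)"
      unfolding M_def using cmat_of_power[OF g[folded n_def] a(1) b(1)] a b by simp
    finally show ?thesis by simp
  qed
  thus ?thesis by blast
qed

subsection \<open>Eigenvalues and growth of matrix powers\<close>

lemma is_eigenvalue_of_scaled:
  assumes "is_eigenvalue T (\<lambda>i j. c * A i j) w" "c \<noteq> 0"
  shows "is_eigenvalue T A (w / of_real c)"
proof -
  from assms(1) obtain v where v: "\<exists>i\<in>T. v i \<noteq> 0"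
    "\<forall>i\<in>T. (\<Sum>j\<in>T. of_real (c * A i j) * v j) = w * v i" unfolding is_eigenvalue_def by auto
  have "(\<Sum>j\<in>T. of_real (A i j) * v j) = (w / of_real c) * v i" if "i \<in> T" for i
  proof -
    have "of_real c * (\<Sum>j\<in>T. of_real (A i j) * v j) = w * v i"
      using v(2) that by (simp add: sum_distrib_left mult_ac)
    thus ?thesis using assms(2) by (simp add: field_simps)
  qed
  thus ?thesis using v(1) unfolding is_eigenvalue_def by blast
qed

lemma mpow_geometric_bound:
  assumes T: "finite T" "T \<noteq> {}" and r: "r > 0"
    and lt: "\<And>z. is_eigenvalue T A z \<Longrightarrow> cmod z < r"
  shows "\<exists>C. \<forall>k. \<forall>i\<in>T. \<forall>j\<in>T. \<bar>mpow T A k i j\<bar> \<le> C * r ^ k"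
proof -
  have "cmod w < 1" if "is_eigenvalue T (\<lambda>i j. inverse r * A i j) w" for w
  proof -
    have "is_eigenvalue T A (w / of_real (inverse r))"
      using is_eigenvalue_of_scaled[OF that] r by simp
    hence "cmod (w * of_real r) < r" using lt r by (simp add: divide_inverse)
    thus ?thesis using r by (simp add: norm_mult)
  qed
  from mpow_bounded_if_eigenvalues_in_unit_disc[OF T this]
  obtain c where c: "\<forall>k. \<forall>i\<in>T. \<forall>j\<in>T. \<bar>mpow T (\<lambda>i j. inverse r * A i j) k i j\<bar> \<le> c" by blast
  have "\<bar>mpow T A k i j\<bar> \<le> c * r ^ k" if "i \<in> T" "j \<in> T" for k i j
  proof -
    have "inverse r ^ k * \<bar>mpow T A k i j\<bar> \<le> c"
      using c that r by (simp add: mpow_scale abs_mult)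
    thus ?thesis using r by (simp add: field_simps power_inverse)
  qed
  thus ?thesis by blast
qed

lemma is_eigenvalue_mpow:
  fixes v :: "nat \<Rightarrow> complex"
  assumes "finite T" "\<forall>i\<in>T. (\<Sum>j\<in>T. of_real (A i j) * v j) = z * v i" "l \<in> T"
  shows "(\<Sum>k\<in>T. of_real (mpow T A n l k) * v k) = z ^ n * v l"
proof (induction n)
  case 0
  have "(\<Sum>k\<in>T. of_real (mpow T A 0 l k) * v k) = (\<Sum>k\<in>T. if k = l then v l else 0)"
    by (rule sum.cong) auto
  then show ?case using assms(1,3) by simp
next
  case (Suc n)
  have "(\<Sum>k\<in>T. of_real (mpow T A (Suc n) l k) * v k)
      = (\<Sum>k\<in>T. \<Sum>l'\<in>T. of_real (mpow T A n l l') * (of_real (A l' k) * v k))"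
    by (intro sum.cong refl) (simp add: sum_distrib_right mult.assoc)
  also have "\<dots> = (\<Sum>l'\<in>T. of_real (mpow T A n l l') * (\<Sum>k\<in>T. of_real (A l' k) * v k))"
    by (simp only: sum_distrib_left) (rule sum.swap)
  also have "\<dots> = (\<Sum>l'\<in>T. of_real (mpow T A n l l') * (z * v l'))"
    using assms(2) by (intro sum.cong) auto
  also have "\<dots> = z * (\<Sum>l'\<in>T. of_real (mpow T A n l l') * v l')"
    by (simp add: sum_distrib_left mult_ac)
  finally show ?case using Suc by simp
qed

lemma exists_max_norm_entry:
  fixes v :: "nat \<Rightarrow> complex"
  assumes "finite T" "\<exists>i\<in>T. v i \<noteq> 0"
  obtains l where "l \<in> T" "\<forall>k\<in>T. cmod (v k) \<le> cmod (v l)" "cmod (v l) > 0"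
proof -
  have "Max ((\<lambda>k. cmod (v k)) ` T) \<in> (\<lambda>k. cmod (v k)) ` T"
    by (rule Max_in) (use assms in auto)
  then obtain l where l: "l \<in> T" "cmod (v l) = Max ((\<lambda>k. cmod (v k)) ` T)" by auto
  have le: "\<forall>k\<in>T. cmod (v k) \<le> cmod (v l)" using l(2) assms(1) by auto
  from assms(2) obtain i where "i \<in> T" "v i \<noteq> 0" by auto
  hence "cmod (v l) > 0" using le by (meson zero_less_norm_iff order_less_le_trans)
  with l le that show ?thesis by blast
qed

lemma is_eigenvalue_row_sum_ge:
  assumes T: "finite T" and nn: "\<forall>i\<in>T. \<forall>j\<in>T. A i j \<ge> 0" and ev: "is_eigenvalue T A z"
  shows "\<exists>l\<in>T. \<forall>n. cmod z ^ n \<le> (\<Sum>k\<in>T. mpow T A n l k)"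
proof -
  from ev obtain v where v: "\<exists>i\<in>T. v i \<noteq> 0"
      "\<forall>i\<in>T. (\<Sum>j\<in>T. of_real (A i j) * v j) = z * v i" unfolding is_eigenvalue_def by auto
  obtain l where l: "l \<in> T" "\<forall>k\<in>T. cmod (v k) \<le> cmod (v l)" "cmod (v l) > 0"
    using exists_max_norm_entry[OF T v(1)] by blast
  have "cmod z ^ n \<le> (\<Sum>k\<in>T. mpow T A n l k)" for n
  proof -
    have "cmod z ^ n * cmod (v l) = cmod (\<Sum>k\<in>T. of_real (mpow T A n l k) * v k)"
      using is_eigenvalue_mpow[OF T v(2) l(1)] by (simp add: norm_mult norm_power)
    also have "\<dots> \<le> (\<Sum>k\<in>T. cmod (of_real (mpow T A n l k) * v k))" by (rule norm_sum)
    also have "\<dots> = (\<Sum>k\<in>T. mpow T A n l k * cmod (v k))"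
      using mpow_nonneg[OF nn l(1)] by (intro sum.cong) (auto simp: norm_mult)
    also have "\<dots> \<le> (\<Sum>k\<in>T. mpow T A n l k * cmod (v l))"
      using mpow_nonneg[OF nn l(1)] l(2) by (intro sum_mono mult_left_mono) auto
    also have "\<dots> = (\<Sum>k\<in>T. mpow T A n l k) * cmod (v l)" by (simp add: sum_distrib_right)
    finally show ?thesis using l(3) by simp
  qed
  with l show ?thesis by blast
qed

lemma is_eigenvalue_norm_le_entry_sum:
  assumes T: "finite T" and ev: "is_eigenvalue T A z"
  shows "cmod z \<le> (\<Sum>i\<in>T. \<Sum>j\<in>T. \<bar>A i j\<bar>)"
proof -
  from ev obtain v where v: "\<exists>i\<in>T. v i \<noteq> 0"
      "\<forall>i\<in>T. (\<Sum>j\<in>T. of_real (A i j) * v j) = z * v i" unfolding is_eigenvalue_def by auto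
  obtain l where l: "l \<in> T" "\<forall>k\<in>T. cmod (v k) \<le> cmod (v l)" "cmod (v l) > 0"
    using exists_max_norm_entry[OF T v(1)] by blast
  have "cmod z * cmod (v l) = cmod (\<Sum>j\<in>T. of_real (A l j) * v j)"
    using v(2) l(1) by (simp add: norm_mult)
  also have "\<dots> \<le> (\<Sum>j\<in>T. cmod (of_real (A l j) * v j))" by (rule norm_sum)
  also have "\<dots> \<le> (\<Sum>j\<in>T. \<bar>A l j\<bar> * cmod (v l))"
    using l(2) by (intro sum_mono) (auto simp: norm_mult intro: mult_left_mono)
  also have "\<dots> = (\<Sum>j\<in>T. \<bar>A l j\<bar>) * cmod (v l)" by (simp add: sum_distrib_right)
  also have "\<dots> \<le> (\<Sum>i\<in>T. \<Sum>j\<in>T. \<bar>A i j\<bar>) * cmod (v l)"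
    using l T by (intro mult_right_mono member_le_sum[where f = "\<lambda>i. \<Sum>j\<in>T. \<bar>A i j\<bar>"]) (auto intro: sum_nonneg)
  finally show ?thesis using l(3) by simp
qed

lemma bdd_above_eigenvalue_norms:
  assumes "finite T"
  shows "bdd_above {cmod z | z. is_eigenvalue T A z}"
  using is_eigenvalue_norm_le_entry_sum[OF assms] unfolding bdd_above_def by blast

lemma is_eigenvalue_norm_le_pf_eigenvalue:
  assumes "finite T" "is_eigenvalue T A z"
  shows "cmod z \<le> pf_eigenvalue T A"
  unfolding pf_eigenvalue_def
  using assms(2) by (intro cSup_upper bdd_above_eigenvalue_norms[OF assms(1)]) auto

lemma pf_eigenvalue_nonneg:
  assumes "finite T" "T \<noteq> {}"
  shows "pf_eigenvalue T A \<ge> 0"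
proof -
  obtain z where "is_eigenvalue T A z" using is_eigenvalue_exists[OF assms] by blast
  from is_eigenvalue_norm_le_pf_eigenvalue[OF assms(1) this] show ?thesis
    by (meson norm_ge_zero order_trans)
qed

lemma less_pf_eigenvalue_imp_is_eigenvalue:
  assumes "finite T" "T \<noteq> {}" "r < pf_eigenvalue T A"
  shows "\<exists>z. is_eigenvalue T A z \<and> r < cmod z"
proof -
  have "{cmod z | z. is_eigenvalue T A z} \<noteq> {}" using is_eigenvalue_exists[OF assms(1,2)] by auto
  from less_cSupD[OF this, of r] show ?thesis using assms(3) unfolding pf_eigenvalue_def by auto
qed

subsection \<open>Geometric bounds on survival probabilities\<close>

lemma prob_vec_le_1:
  assumes "finite S" "prob_vec S p" "a \<in> S"
  shows "\<bar>p a\<bar> \<le> 1"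
proof -
  have "p a \<le> (\<Sum>a\<in>S. p a)" using assms unfolding prob_vec_def by (intro member_le_sum) auto
  thus ?thesis using assms unfolding prob_vec_def by auto
qed

lemma survival_upper_geometric:
  assumes S: "finite S" and T: "S - {i} \<noteq> {}" and r: "pf_eigenvalue (S - {i}) A < r"
    and p: "prob_vec S p"
  shows "\<exists>K. \<forall>n. survival S A i n p \<le> K * r ^ n"
proof -
  define T where "T = S - {i}"
  have fT: "finite T" using S unfolding T_def by simp
  have r0: "r > 0" using pf_eigenvalue_nonneg[OF fT T[folded T_def], of A] r unfolding T_def by linarith
  have "cmod z < r" if "is_eigenvalue T A z" for z
    using is_eigenvalue_norm_le_pf_eigenvalue[OF fT that] r unfolding T_def by linarith
  from mpow_geometric_bound[OF fT T[folded T_def] r0 this]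
  obtain C where C: "\<forall>k. \<forall>a\<in>T. \<forall>b\<in>T. \<bar>mpow T A k a b\<bar> \<le> C * r ^ k" by blast
  have "survival S A i n p \<le> (card T * (card T * \<bar>C\<bar>)) * r ^ n" for n
  proof -
    have entry: "p a * mpow T A n a b \<le> \<bar>C\<bar> * r ^ n" if "a \<in> T" "b \<in> T" for a b
    proof -
      have "p a * mpow T A n a b \<le> \<bar>p a\<bar> * \<bar>mpow T A n a b\<bar>"
        by (metis abs_ge_self abs_mult)
      also have "\<dots> \<le> 1 * (C * r ^ n)"
        using prob_vec_le_1[OF S p, of a] C that unfolding T_def by (intro mult_mono) auto
      also have "\<dots> \<le> \<bar>C\<bar> * r ^ n" using r0 by (simp add: mult_right_mono)
      finally show ?thesis .
    qed
    have "survival S A i n p = (\<Sum>b\<in>T. \<Sum>a\<in>T. p a * mpow T A n a b)"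
      unfolding survival_def T_def ..
    also have "\<dots> \<le> (\<Sum>b\<in>T. card T * (\<bar>C\<bar> * r ^ n))"
      using entry by (intro sum_mono sum_bounded_above) auto
    finally show ?thesis by simp
  qed
  thus ?thesis by blast
qed

text \<open>Every row reaches \<open>l\<close> in \<open>m\<close> steps with positive weight, so it inherits the growth of row \<open>l\<close>.\<close>

lemma primitive_row_sums_ge:
  assumes U: "finite U" and nn: "\<forall>a\<in>U. \<forall>b\<in>U. A a b \<ge> 0" and l: "l \<in> U"
    and row: "\<forall>n. r ^ n \<le> (\<Sum>k\<in>U. mpow U A n l k)" and r: "r > 0"
    and prim: "\<exists>n0. \<forall>n>n0. \<forall>a\<in>U. \<forall>b\<in>U. mpow U A n a b > 0"
  shows "\<exists>\<delta>>0. \<exists>m. \<forall>a\<in>U. \<forall>n. \<delta> * r ^ n \<le> (\<Sum>b\<in>U. mpow U A (m + n) a b)"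
proof -
  from prim obtain n0 where n0: "\<forall>n>n0. \<forall>a\<in>U. \<forall>b\<in>U. mpow U A n a b > 0" by blast
  define m where "m = Suc n0"
  define \<delta> where "\<delta> = Min ((\<lambda>a. mpow U A m a l) ` U)"
  have \<delta>0: "\<delta> > 0"
    unfolding \<delta>_def using U l n0 by (subst Min_gr_iff) (auto simp: m_def)
  have "\<delta> * r ^ n \<le> (\<Sum>b\<in>U. mpow U A (m + n) a b)" if a: "a \<in> U" for a n
  proof -
    have "\<delta> * r ^ n \<le> mpow U A m a l * (\<Sum>b\<in>U. mpow U A n l b)"
      using Min_le[OF _ imageI[OF a]] U row \<delta>0 r mpow_nonneg[OF nn a l] unfolding \<delta>_def
      by (intro mult_mono) auto
    also have "\<dots> \<le> (\<Sum>c\<in>U. mpow U A m a c * (\<Sum>b\<in>U. mpow U A n c b))"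
      using U l mpow_nonneg[OF nn a] mpow_nonneg[OF nn]
      by (intro member_le_sum[where f = "\<lambda>c. mpow U A m a c * (\<Sum>b\<in>U. mpow U A n c b)"]
          mult_nonneg_nonneg sum_nonneg) auto
    also have "\<dots> = (\<Sum>b\<in>U. \<Sum>c\<in>U. mpow U A m a c * mpow U A n c b)"
      by (simp only: sum_distrib_left) (rule sum.swap)
    also have "\<dots> = (\<Sum>b\<in>U. mpow U A (m + n) a b)"
      using mpow_add[OF U] by (intro sum.cong) auto
    finally show ?thesis .
  qed
  with \<delta>0 show ?thesis by blast
qed

lemma survival_lower_geometric:
  assumes S: "finite S" and nn: "\<forall>a\<in>S. \<forall>b\<in>S. A a b \<ge> 0" and j: "j \<in> S"
    and U: "S - {j} \<noteq> {}"
    and prim: "\<exists>n0. \<forall>n>n0. \<forall>a\<in>S-{j}. \<forall>b\<in>S-{j}. mpow (S-{j}) A n a b > 0"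
    and r: "0 < r" "r < pf_eigenvalue (S - {j}) A"
    and q: "prob_vec S q" and qj: "q j < 1"
  shows "\<exists>c>0. \<forall>\<^sub>F n in sequentially. c * r ^ n \<le> survival S A j n q"
proof -
  define U where "U = S - {j}"
  have fU: "finite U" using S unfolding U_def by simp
  have nnU: "\<forall>a\<in>U. \<forall>b\<in>U. A a b \<ge> 0" using nn unfolding U_def by auto
  from less_pf_eigenvalue_imp_is_eigenvalue[OF fU U[folded U_def] r(2)[folded U_def]]
  obtain z where z: "is_eigenvalue U A z" "r < cmod z" by blast
  from is_eigenvalue_row_sum_ge[OF fU nnU z(1)]
  obtain l where l: "l \<in> U" "\<forall>n. cmod z ^ n \<le> (\<Sum>k\<in>U. mpow U A n l k)" by blast
  have "\<forall>n. r ^ n \<le> (\<Sum>k\<in>U. mpow U A n l k)"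
    using l(2) power_mono[of r "cmod z"] z(2) r(1) by (meson less_imp_le order_trans)
  from primitive_row_sums_ge[OF fU nnU l(1) this r(1) prim[folded U_def]]
  obtain \<delta> m where \<delta>: "\<delta> > 0" "\<forall>a\<in>U. \<forall>n. \<delta> * r ^ n \<le> (\<Sum>b\<in>U. mpow U A (m + n) a b)"
    by blast
  have mass: "(\<Sum>a\<in>U. q a) = 1 - q j"
    using q sum.remove[OF S j, of q] unfolding prob_vec_def U_def by auto
  have lb: "(1 - q j) * \<delta> * r ^ k \<le> survival S A j (m + k) q" for k
  proof -
    have "(1 - q j) * \<delta> * r ^ k = (\<Sum>a\<in>U. q a * (\<delta> * r ^ k))"
      using mass by (simp add: sum_distrib_right[symmetric])
    also have "\<dots> \<le> (\<Sum>a\<in>U. q a * (\<Sum>b\<in>U. mpow U A (m + k) a b))"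
      using \<delta>(2) q unfolding prob_vec_def U_def by (intro sum_mono mult_left_mono) auto
    also have "\<dots> = survival S A j (m + k) q"
      unfolding survival_def U_def[symmetric] by (simp only: sum_distrib_left) (rule sum.swap)
    finally show ?thesis .
  qed
  define c where "c = (1 - q j) * \<delta> / r ^ m"
  have "c * r ^ n \<le> survival S A j n q" if nm: "n \<ge> m" for n
  proof -
    obtain k where k: "n = m + k" using le_Suc_ex[OF nm] by blast
    have "c * r ^ n = (1 - q j) * \<delta> * r ^ k"
      unfolding c_def k using r(1) by (simp add: power_add)
    thus ?thesis using lb[of k] k by simp
  qed
  moreover have "c > 0" unfolding c_def using qj \<delta>(1) r(1) by auto
  ultimately show ?thesis unfolding eventually_sequentially by blast
qed

lemma geometric_eventually_less:
  fixes K c r1 r :: real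
  assumes "0 < r1" "r1 < r" "c > 0"
  shows "\<forall>\<^sub>F n in sequentially. K * r1 ^ n < c * r ^ n"
proof -
  have "(\<lambda>n. (r1 / r) ^ n) \<longlonglongrightarrow> 0"
    by (rule LIMSEQ_power_zero) (use assms in auto)
  hence "\<forall>\<^sub>F n in sequentially. (r1 / r) ^ n < c / (\<bar>K\<bar> + 1)"
    using assms by (intro order_tendstoD(2)) auto
  thus ?thesis
  proof (rule eventually_mono)
    fix n assume n: "(r1 / r) ^ n < c / (\<bar>K\<bar> + 1)"
    have r: "r > 0" using assms by linarith
    have "(\<bar>K\<bar> + 1) * r1 ^ n < c * r ^ n"
      using n r by (simp add: field_simps power_divide)
    moreover have "K * r1 ^ n \<le> (\<bar>K\<bar> + 1) * r1 ^ n"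
      using assms(1) by (intro mult_right_mono) auto
    ultimately show "K * r1 ^ n < c * r ^ n" by linarith
  qed
qed

lemma survival_eventually_less:
  assumes S: "finite S" and nn: "\<forall>a\<in>S. \<forall>b\<in>S. A a b \<ge> 0"
    and j: "j \<in> S" and Ti: "S - {i} \<noteq> {}" and Tj: "S - {j} \<noteq> {}"
    and prim: "\<exists>n0. \<forall>n>n0. \<forall>a\<in>S-{j}. \<forall>b\<in>S-{j}. mpow (S-{j}) A n a b > 0"
    and lt: "pf_eigenvalue (S - {i}) A < pf_eigenvalue (S - {j}) A"
    and p: "prob_vec S p" and q: "prob_vec S q" and qj: "q j < 1"
  shows "\<forall>\<^sub>F n in sequentially. survival S A i n p < survival S A j n q"
proof -
  define mi where "mi = pf_eigenvalue (S - {i}) A"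
  define mj where "mj = pf_eigenvalue (S - {j}) A"
  have "mi \<ge> 0" unfolding mi_def using S Ti by (intro pf_eigenvalue_nonneg) auto
  define r1 where "r1 = (2 * mi + mj) / 3"
  define r where "r = (mi + 2 * mj) / 3"
  have r: "0 < r1" "mi < r1" "r1 < r" "0 < r" "r < mj"
    using \<open>mi \<ge> 0\<close> lt unfolding r1_def r_def mi_def mj_def by auto
  obtain K where K: "\<forall>n. survival S A i n p \<le> K * r1 ^ n"
    using survival_upper_geometric[OF S Ti _ p] r(2) unfolding mi_def by blast
  obtain c where c: "c > 0" "\<forall>\<^sub>F n in sequentially. c * r ^ n \<le> survival S A j n q"
    using survival_lower_geometric[OF S nn j Tj prim r(4) _ q qj] r(5) unfolding mj_def by blast
  show ?thesis
    using eventually_conj[OF geometric_eventually_less[OF r(1,3) c(1), of K] c(2)]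
  proof (rule eventually_mono)
    fix n assume "K * r1 ^ n < c * r ^ n \<and> c * r ^ n \<le> survival S A j n q"
    with K show "survival S A i n p < survival S A j n q" by (meson order_le_less_trans order_less_le_trans)
  qed
qed

lemma decay_rate_less_imp_pf_eigenvalue_less:
  assumes "decay_rate S P i > decay_rate S P j"
    and "pf_eigenvalue (S - {i}) P \<ge> 0" "pf_eigenvalue (S - {j}) P \<ge> 0"
  shows "pf_eigenvalue (S - {i}) P < pf_eigenvalue (S - {j}) P"
  using assms unfolding decay_rate_def Let_def
  by (cases "pf_eigenvalue (S - {i}) P = 0"; cases "pf_eigenvalue (S - {j}) P = 0") auto

theorem corollary1:
  fixes N :: nat and P :: "nat \<Rightarrow> nat \<Rightarrow> real"
  assumes N: "N \<ge> 2"
    and stoch: "stochastic {1..N} P"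
    and irred: "irreducible_chain {1..N} P"
    and prim: "\<forall>k\<in>{1..N}. \<exists>n0. \<forall>n>n0. \<forall>i\<in>{1..N} - {k}. \<forall>j\<in>{1..N} - {k}.
                  mpow ({1..N} - {k}) P n i j > 0"
  shows
   "(\<forall>i\<in>{1..N}. \<forall>j\<in>{1..N}. \<forall>p q.
       decay_rate {1..N} P i > decay_rate {1..N} P j \<longrightarrow>
       prob_vec {1..N} p \<longrightarrow> prob_vec {1..N} q \<longrightarrow> q j < 1 \<longrightarrow>
       (\<exists>n0. \<forall>n\<ge>n0. survival {1..N} P i n p < survival {1..N} P j n q))
  \<and> (\<forall>\<sigma> p. bij_betw \<sigma> {1..N} {1..N} \<longrightarrow>
       (\<forall>a\<in>{1..<N}. decay_rate {1..N} P (\<sigma> (a + 1)) < decay_rate {1..N} P (\<sigma> a)) \<longrightarrow>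
       decay_rate {1..N} P (\<sigma> 1) < \<infinity> \<longrightarrow>
       (\<forall>i\<in>{1..N}. prob_vec {1..N} (p i) \<and> p i i < 1) \<longrightarrow>
       (\<exists>n0. \<forall>n\<ge>n0. \<forall>a\<in>{1..<N}.
          survival {1..N} P (\<sigma> a) n (p (\<sigma> a)) < survival {1..N} P (\<sigma> (a + 1)) n (p (\<sigma> (a + 1)))))
  \<and> (\<forall>i\<in>{1..N}. (\<forall>k\<in>{1..N} - {i}. decay_rate {1..N} P i > decay_rate {1..N} P k) \<longrightarrow>
       (\<forall>p. \<forall>k\<in>{1..N} - {i}. prob_vec {1..N} p \<longrightarrow> p k < 1 \<longrightarrow>
          (\<exists>n0. \<forall>n\<ge>n0. survival {1..N} P i n p < survival {1..N} P k n p)))"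
proof -
  let ?S = "{1..N::nat}"
  have nn: "\<forall>a\<in>?S. \<forall>b\<in>?S. P a b \<ge> 0" using stoch unfolding stochastic_def by auto
  have ne: "?S - {k} \<noteq> {}" for k
  proof -
    have "(if k = 1 then 2 else 1) \<in> ?S - {k}" using N by auto
    thus ?thesis by blast
  qed
  have cmp: "\<forall>\<^sub>F n in sequentially. survival ?S P i n p < survival ?S P j n q"
    if "i \<in> ?S" "j \<in> ?S" "decay_rate ?S P i > decay_rate ?S P j"
      "prob_vec ?S p" "prob_vec ?S q" "q j < 1" for i j p q
    using that nn prim ne pf_eigenvalue_nonneg[OF _ ne]
    by (intro survival_eventually_less decay_rate_less_imp_pf_eigenvalue_less) auto
  have chain: "\<forall>\<^sub>F n in sequentially. \<forall>a\<in>{1..<N}.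
      survival ?S P (\<sigma> a) n (p (\<sigma> a)) < survival ?S P (\<sigma> (a + 1)) n (p (\<sigma> (a + 1)))"
    if "bij_betw \<sigma> ?S ?S" "\<forall>a\<in>{1..<N}. decay_rate ?S P (\<sigma> (a + 1)) < decay_rate ?S P (\<sigma> a)"
      "\<forall>i\<in>?S. prob_vec ?S (p i) \<and> p i i < 1" for \<sigma> p
    using that bij_betw_apply[OF that(1)] by (intro eventually_ball_finite ballI cmp) auto
  show ?thesis
    unfolding eventually_sequentially[symmetric] using cmp chain by auto
qed

end
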